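(* Let $p$ be a prime and let $\tau:\mathbb Z_p\to \mathbb Z/p[\![x]\!]^\times$ be the continuous homomorphism from the additive group of $p$-adic integers sending $\alpha$ to $(1-x)^\alpha$ (so $1\mapsto 1-x$). Let $K$ be the subfield of the field of formal Laurent series $\mathbb Z/p(\!(x)\!)$ generated by the image of $\tau$. Then the degree $[\mathbb Z/p(\!(x)\!):K]$ is uncountable.
   Context: In the paper $\mathbb Z_p$ is written multiplicatively as $C\otimes\mathbb Z_p=\{t^\alpha:\alpha\in\mathbb Z_p\}$ with $C=\langle t\rangle$ infinite cyclic, and $\tau(t^\alpha)=(1-x)^\alpha$; the homomorphism is well defined and continuous because $(1-x)^{p^i}=1-x^{p^i}$ in characteristic $p$. *)

theory Defs
  imports "HOL-Computational_Algebra.Formal_Laurent_Series" "HOL-Library.Cardinality" "HOL-Library.Countable_Set"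
begin

text \<open>p-adic integers, represented as compatible sequences of residues:
  alpha = (a_k)_k with a_k in [0, p^k) and a_(k+1) = a_k mod p^k
  (the inverse limit of Z/p^k).\<close>
definition padic_int :: "nat \<Rightarrow> (nat \<Rightarrow> nat) set" where
  "padic_int p = {a. \<forall>k. a k < p ^ k \<and> a (Suc k) mod p ^ k = a k}"

text \<open>tau(alpha) = (1 - x)^alpha = lim_k (1 - x)^(a_k) (x-adic limit).
  Since p^(n+1) > n, the n-th coefficient is already determined by (1-x)^(a_(n+1))
  (in characteristic p, (1-x)^(p^k) = 1 - x^(p^k)).\<close>
definition tau :: "(nat \<Rightarrow> nat) \<Rightarrow> 'a::comm_ring_1 fls" where
  "tau a = fps_to_fls (Abs_fps (\<lambda>n. fps_nth ((1 - fps_X) ^ (a (Suc n))) n))"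

definition is_subfield :: "'a::field set \<Rightarrow> bool" where
  "is_subfield F \<longleftrightarrow> 0 \<in> F \<and> 1 \<in> F \<and>
     (\<forall>x\<in>F. \<forall>y\<in>F. x + y \<in> F \<and> x * y \<in> F) \<and>
     (\<forall>x\<in>F. - x \<in> F \<and> inverse x \<in> F)"

definition subfield_generated :: "'a::field set \<Rightarrow> 'a set" where
  "subfield_generated S = \<Inter> {F. S \<subseteq> F \<and> is_subfield F}"

definition lin_indep_over :: "'a::field set \<Rightarrow> 'a set \<Rightarrow> bool" where
  "lin_indep_over K B \<longleftrightarrow>
     (\<forall>F c. finite F \<and> F \<subseteq> B \<and> (\<forall>v\<in>F. c v \<in> K) \<and> (\<Sum>v\<in>F. c v * v) = 0
        \<longrightarrow> (\<forall>v\<in>F. c v = 0))"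

definition spans_over :: "'a::field set \<Rightarrow> 'a set \<Rightarrow> bool" where
  "spans_over K B \<longleftrightarrow>
     (\<forall>y. \<exists>F c. finite F \<and> F \<subseteq> B \<and> (\<forall>v\<in>F. c v \<in> K) \<and> y = (\<Sum>v\<in>F. c v * v))"

definition basis_over :: "'a::field set \<Rightarrow> 'a set \<Rightarrow> bool" where
  "basis_over K B \<longleftrightarrow> lin_indep_over K B \<and> spans_over K B"

end

theory Submission
  imports Defs "HOL-Number_Theory.Residues" "HOL-Real_Asymp.Real_Asymp"
begin

text \<open>Every element of \<open>K\<close> is a quotient of two elements of the ring \<open>R\<close> generated by the
  series \<open>\<tau>(\<alpha>)\<close>. This ring is the countable union of the sets \<open>R\<^sub>j\<close> of elements built in at
  most \<open>j\<close> ring operations, and modulo \<open>x\<^sup>N\<close> the set \<open>R\<^sub>j\<close> takes only polynomially many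
  values in \<open>N\<close>: modulo \<open>x\<^bsup>p\<^sup>k\<^esup>\<close> every \<open>\<tau>(\<alpha>)\<close> is one of the \<open>p\<^sup>k\<close> polynomials
  \<open>(1 - x)\<^sup>a\<close>, \<open>a < p\<^sup>k\<close>, because \<open>(1 - x)\<^bsup>p\<^sup>k\<^esup> = 1 - x\<^bsup>p\<^sup>k\<^esup>\<close>.
  If the field of Laurent series had a countable basis \<open>B\<close> over \<open>K\<close>, then clearing denominators
  every power series \<open>g\<close> would satisfy \<open>g D = \<Sum>\<^sub>v N\<^sub>v v\<close> with \<open>F \<subseteq> B\<close> finite, \<open>D \<noteq> 0\<close> and
  \<open>D, N\<^sub>v \<in> R\<^sub>j\<close>. For fixed \<open>j\<close>, \<open>F\<close> and order of \<open>D\<close>, such \<open>g\<close> have only polynomially many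
  truncations modulo \<open>x\<^sup>M\<close>, far fewer than \<open>p\<^sup>M\<close>; so these countably many sets are nowhere dense
  in the \<open>x\<close>-adic topology and cannot cover all power series.\<close>

section \<open>Truncations of \<open>\<tau>(\<alpha>)\<close>\<close>

lemma CHAR_eq_CARD_prime:
  assumes "prime p" "CARD('a::field) = p"
  shows "CHAR('a) = p"
proof -
  have "CHAR('a) dvd p" using CHAR_dvd_CARD[where 'a='a] assms(2) by simp
  then show ?thesis using assms(1) CHAR_not_1 by (metis One_nat_def prime_nat_iff)
qed

lemma one_minus_fps_X_power_CHAR_power:
  assumes "prime CHAR('a::comm_ring_1)"
  shows "(1 - fps_X :: 'a fps) ^ (CHAR('a) ^ k) = 1 - fps_X ^ (CHAR('a) ^ k)"
proof -
  have "((1 - fps_X) + fps_X :: 'a fps) ^ (CHAR('a) ^ k)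
      = (1 - fps_X) ^ (CHAR('a) ^ k) + fps_X ^ (CHAR('a) ^ k)"
    by (rule freshmans_dream') (use assms in auto)
  then show ?thesis by (simp add: algebra_simps)
qed

lemma fps_cutoff_mult_cong:
  assumes "fps_cutoff n f = fps_cutoff n f'" "fps_cutoff n g = fps_cutoff n g'"
  shows "fps_cutoff n (f * g) = fps_cutoff n (f' * g' :: 'a::comm_semiring_0 fps)"
proof -
  have "(f * g) $ k = (f' * g') $ k" if "k < n" for k
    using assms that unfolding fps_cutoff_eq_fps_cutoff_iff fps_mult_nth by (intro sum.cong) auto
  then show ?thesis by (simp add: fps_cutoff_eq_fps_cutoff_iff)
qed

lemma fps_cutoff_power_cong:
  "fps_cutoff n f = fps_cutoff n f' \<Longrightarrow> fps_cutoff n (f ^ k) = fps_cutoff n (f' ^ k :: 'a::comm_semiring_1 fps)"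
  by (induction k) (auto intro: fps_cutoff_mult_cong)

lemma fps_cutoff_one_minus_fps_X_power_mod:
  fixes m c :: nat
  assumes "prime CHAR('a::comm_ring_1)"
  defines "q \<equiv> CHAR('a) ^ m"
  shows "fps_cutoff q ((1 - fps_X :: 'a fps) ^ c) = fps_cutoff q ((1 - fps_X) ^ (c mod q))"
proof -
  have "(1 - fps_X :: 'a fps) ^ c = ((1 - fps_X) ^ q) ^ (c div q) * (1 - fps_X) ^ (c mod q)"
    by (simp flip: power_mult power_add)
  also have "\<dots> = (1 - fps_X ^ q) ^ (c div q) * (1 - fps_X) ^ (c mod q)"
    using one_minus_fps_X_power_CHAR_power[OF assms(1)] by (simp add: q_def)
  finally have split: "(1 - fps_X :: 'a fps) ^ c = (1 - fps_X ^ q) ^ (c div q) * (1 - fps_X) ^ (c mod q)" .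
  have "fps_cutoff q (1 - fps_X ^ q :: 'a fps) = fps_cutoff q 1"
    by (auto simp: fps_cutoff_eq_fps_cutoff_iff fps_X_power_iff)
  then have "fps_cutoff q ((1 - fps_X ^ q :: 'a fps) ^ (c div q)) = fps_cutoff q (1 ^ (c div q))"
    by (rule fps_cutoff_power_cong)
  then have "fps_cutoff q ((1 - fps_X ^ q :: 'a fps) ^ (c div q) * (1 - fps_X) ^ (c mod q))
      = fps_cutoff q (1 ^ (c div q) * (1 - fps_X) ^ (c mod q))"
    by (rule fps_cutoff_mult_cong) (rule refl)
  then show ?thesis unfolding split by simp
qed

lemma padic_int_mod:
  assumes "\<alpha> \<in> padic_int p" "i \<le> j"
  shows "\<alpha> j mod p ^ i = \<alpha> i"
  using assms(2)
proof (induction j)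
  case 0
  have "\<alpha> 0 < p ^ 0" using assms(1) unfolding padic_int_def by blast
  then show ?case using 0 by simp
next
  case (Suc j)
  show ?case
  proof (cases "i = Suc j")
    case True
    have "\<alpha> (Suc j) < p ^ Suc j" using assms(1) unfolding padic_int_def by blast
    then show ?thesis using True by simp
  next
    case False
    then have "i \<le> j" using Suc.prems by simp
    then have "\<alpha> (Suc j) mod p ^ i = (\<alpha> (Suc j) mod p ^ j) mod p ^ i"
      by (simp add: mod_mod_cancel le_imp_power_dvd)
    then show ?thesis using Suc.IH \<open>i \<le> j\<close> assms(1) by (simp add: padic_int_def)
  qed
qed

definition tau_fps :: "(nat \<Rightarrow> nat) \<Rightarrow> 'a::comm_ring_1 fps" where
  "tau_fps a = Abs_fps (\<lambda>n. ((1 - fps_X) ^ a (Suc n)) $ n)"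

lemma tau_eq_fps_to_fls_tau_fps: "tau a = fps_to_fls (tau_fps a)"
  by (simp add: tau_def tau_fps_def)

lemma fps_cutoff_tau_fps:
  assumes "prime CHAR('a::comm_ring_1)" "\<alpha> \<in> padic_int CHAR('a)"
  shows "fps_cutoff (CHAR('a) ^ k) (tau_fps \<alpha> :: 'a fps) = fps_cutoff (CHAR('a) ^ k) ((1 - fps_X) ^ \<alpha> k)"
  unfolding fps_cutoff_eq_fps_cutoff_iff
proof (intro allI impI)
  fix n assume n: "n < CHAR('a) ^ k"
  let ?p = "CHAR('a)"
  define m where "m = min (Suc n) k"
  have "n < 2 ^ n" by (rule less_exp)
  also have "\<dots> \<le> ?p ^ n" using assms(1) prime_ge_2_nat by (simp add: power_mono)
  also have "\<dots> \<le> ?p ^ Suc n" using prime_gt_0_nat[OF assms(1)] by simp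
  finally have nm: "n < ?p ^ m" using n by (simp add: m_def min_def)
  have "\<alpha> (Suc n) mod ?p ^ m = \<alpha> k mod ?p ^ m"
    using padic_int_mod[OF assms(2), of m] by (simp add: m_def)
  then have "fps_cutoff (?p ^ m) ((1 - fps_X :: 'a fps) ^ \<alpha> (Suc n))
      = fps_cutoff (?p ^ m) ((1 - fps_X) ^ \<alpha> k)"
    using fps_cutoff_one_minus_fps_X_power_mod[OF assms(1), of m] by metis
  then show "(tau_fps \<alpha> :: 'a fps) $ n = ((1 - fps_X) ^ \<alpha> k) $ n"
    using nm by (simp add: fps_cutoff_eq_fps_cutoff_iff tau_fps_def)
qed

section \<open>Truncations of a finitely generated ring of power series\<close>

lemma card_image_le_if_determined:
  assumes "finite (f ` A)" "\<And>x y. x \<in> A \<Longrightarrow> y \<in> A \<Longrightarrow> f x = f y \<Longrightarrow> g x = g y"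
  shows "finite (g ` A)" "card (g ` A) \<le> card (f ` A)"
proof -
  have "g ` A = (g \<circ> inv_into A f) ` f ` A"
  proof (rule Set.set_eqI)
    fix z
    have "g (inv_into A f (f x)) = g x" if "x \<in> A" for x
      using that by (intro assms(2) inv_into_into f_inv_into_f) auto
    then show "z \<in> g ` A \<longleftrightarrow> z \<in> (g \<circ> inv_into A f) ` f ` A"
      by (auto simp: image_iff)
  qed
  with assms(1) show "finite (g ` A)" "card (g ` A) \<le> card (f ` A)"
    by (simp_all add: card_image_le)
qed

primrec ring_steps :: "'a::comm_ring_1 set \<Rightarrow> nat \<Rightarrow> 'a set" where
  "ring_steps G 0 = insert 0 (insert 1 G)"
| "ring_steps G (Suc j) = ring_steps G j
     \<union> (\<lambda>(a, b). a + b) ` (ring_steps G j \<times> ring_steps G j)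
     \<union> (\<lambda>(a, b). a * b) ` (ring_steps G j \<times> ring_steps G j)
     \<union> uminus ` ring_steps G j"

definition ring_closure :: "'a::comm_ring_1 set \<Rightarrow> 'a set" where
  "ring_closure G = (\<Union>j. ring_steps G j)"

lemma ring_steps_mono: "i \<le> j \<Longrightarrow> ring_steps G i \<subseteq> ring_steps G j"
  by (rule lift_Suc_mono_le[of "ring_steps G"]) auto

lemma ring_steps_common_bound:
  assumes "finite F" "\<And>v. v \<in> F \<Longrightarrow> f v \<in> ring_closure G"
  shows "\<exists>j. \<forall>v\<in>F. f v \<in> ring_steps G j"
  using assms
proof (induction F rule: finite_induct)
  case (insert x F)
  then obtain j where j: "\<forall>v\<in>F. f v \<in> ring_steps G j" by auto
  obtain i where i: "f x \<in> ring_steps G i" using insert.prems by (auto simp: ring_closure_def)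
  show ?case
    using j i ring_steps_mono[of i "max i j" G] ring_steps_mono[of j "max i j" G]
    by (intro exI[of _ "max i j"]) auto
qed simp

lemma ring_steps_Suc_closed:
  assumes "a \<in> ring_steps G j" "b \<in> ring_steps G j"
  shows "a + b \<in> ring_steps G (Suc j)" "a * b \<in> ring_steps G (Suc j)" "- a \<in> ring_steps G (Suc j)"
proof -
  have ab: "(a, b) \<in> ring_steps G j \<times> ring_steps G j" using assms by simp
  show "a + b \<in> ring_steps G (Suc j)" using rev_image_eqI[OF ab, of "a + b" "\<lambda>(a, b). a + b"] by simp
  show "a * b \<in> ring_steps G (Suc j)" using rev_image_eqI[OF ab, of "a * b" "\<lambda>(a, b). a * b"] by simp
  show "- a \<in> ring_steps G (Suc j)" using assms(1) by simp
qed

lemma ring_closureI: "a \<in> ring_steps G j \<Longrightarrow> a \<in> ring_closure G"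
  unfolding ring_closure_def by (rule UN_I[OF UNIV_I])

lemma ring_closureE:
  assumes "a \<in> ring_closure G" "b \<in> ring_closure G"
  obtains j where "a \<in> ring_steps G j" "b \<in> ring_steps G j"
proof -
  obtain i j where "a \<in> ring_steps G i" "b \<in> ring_steps G j"
    using assms unfolding ring_closure_def by blast
  then show ?thesis
    using that ring_steps_mono[of i "max i j" G] ring_steps_mono[of j "max i j" G] by auto
qed

lemma ring_closure_subring:
  "0 \<in> ring_closure G" "1 \<in> ring_closure G" "G \<subseteq> ring_closure G"
  "a \<in> ring_closure G \<Longrightarrow> b \<in> ring_closure G \<Longrightarrow> a + b \<in> ring_closure G"
  "a \<in> ring_closure G \<Longrightarrow> b \<in> ring_closure G \<Longrightarrow> a * b \<in> ring_closure G"
  "a \<in> ring_closure G \<Longrightarrow> - a \<in> ring_closure G"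
proof -
  show "0 \<in> ring_closure G" "1 \<in> ring_closure G" "G \<subseteq> ring_closure G"
    by (auto intro: ring_closureI[of _ G 0])
  assume a: "a \<in> ring_closure G"
  then show "- a \<in> ring_closure G"
    by (metis ring_closureE ring_closureI ring_steps_Suc_closed(3))
  assume "b \<in> ring_closure G"
  with a obtain j where "a \<in> ring_steps G j" "b \<in> ring_steps G j" by (rule ring_closureE)
  then show "a + b \<in> ring_closure G" "a * b \<in> ring_closure G"
    by (auto intro: ring_closureI ring_steps_Suc_closed)
qed

lemma card_fps_cutoff_binop_le:
  assumes "finite (fps_cutoff n ` S)"
    and "\<And>a a' b b'. fps_cutoff n a = fps_cutoff n a' \<Longrightarrow> fps_cutoff n b = fps_cutoff n b'
           \<Longrightarrow> fps_cutoff n (h a b) = fps_cutoff n (h a' b')"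
  shows "finite (fps_cutoff n ` case_prod h ` (S \<times> S))"
    "card (fps_cutoff n ` case_prod h ` (S \<times> S)) \<le> card (fps_cutoff n ` S) ^ 2"
proof -
  let ?key = "map_prod (fps_cutoff n) (fps_cutoff n)"
  have keys: "?key ` (S \<times> S) = fps_cutoff n ` S \<times> fps_cutoff n ` S"
    by (rule map_prod_surj_on) (rule refl)+
  have fin: "finite (?key ` (S \<times> S))"
    unfolding keys using assms(1) by (intro finite_cartesian_product)
  have det: "(fps_cutoff n \<circ> case_prod h) x = (fps_cutoff n \<circ> case_prod h) y"
    if "?key x = ?key y" for x y
  proof -
    obtain a b a' b' where xy: "x = (a, b)" "y = (a', b')" by (cases x, cases y)
    with that have "fps_cutoff n a = fps_cutoff n a'" "fps_cutoff n b = fps_cutoff n b'" by simp_all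
    then have "fps_cutoff n (h a b) = fps_cutoff n (h a' b')" by (rule assms(2))
    then show ?thesis by (simp add: xy)
  qed
  note bound = card_image_le_if_determined[of ?key "S \<times> S" "fps_cutoff n \<circ> case_prod h", OF fin det]
  show "finite (fps_cutoff n ` case_prod h ` (S \<times> S))"
    using bound(1) by (simp only: image_comp)
  have "card (fps_cutoff n ` case_prod h ` (S \<times> S)) \<le> card (?key ` (S \<times> S))"
    using bound(2) by (simp only: image_comp)
  also have "\<dots> = card (fps_cutoff n ` S) ^ 2"
    unfolding keys using assms(1) by (simp add: card_cartesian_product power2_eq_square)
  finally show "card (fps_cutoff n ` case_prod h ` (S \<times> S)) \<le> card (fps_cutoff n ` S) ^ 2" .
qed

lemma linear_plus_square_le_power:
  fixes c B e :: nat
  assumes "c \<le> B ^ e" "2 \<le> B" "1 \<le> e"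
  shows "2 * c + 2 * c ^ 2 \<le> B ^ (4 * e)"
proof -
  have "2 * c + 2 * c ^ 2 \<le> 4 * c ^ 2" by (cases c) (simp_all add: power2_eq_square)
  also have "\<dots> \<le> B ^ 2 * (B ^ e) ^ 2"
  proof (intro mult_le_mono power_mono)
    show "4 \<le> B ^ 2" using mult_le_mono[OF assms(2) assms(2)] by (simp add: power2_eq_square)
  qed (use assms(1) in simp_all)
  also have "\<dots> = B ^ (2 + e * 2)" by (simp only: power_add power_mult)
  also have "\<dots> \<le> B ^ (4 * e)" using assms(2,3) by (intro power_increasing) simp_all
  finally show ?thesis .
qed

lemma card_fps_cutoff_ring_steps:
  fixes G :: "'a::comm_ring_1 fps set"
  assumes "finite (fps_cutoff n ` G)"
  shows "finite (fps_cutoff n ` ring_steps G j)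
    \<and> card (fps_cutoff n ` ring_steps G j) \<le> (card (fps_cutoff n ` G) + 2) ^ 4 ^ j"
proof (induction j)
  case 0
  have "card (fps_cutoff n ` ring_steps G 0) \<le> Suc (Suc (card (fps_cutoff n ` G)))"
    using assms by (simp add: card_insert_le_m1 card_insert_if)
  then show ?case using assms by simp
next
  case (Suc j)
  let ?S = "ring_steps G j" and ?B = "card (fps_cutoff n ` G) + 2"
  define c where "c = card (fps_cutoff n ` ?S)"
  have fin: "finite (fps_cutoff n ` ?S)" and c: "c \<le> ?B ^ 4 ^ j" using Suc by (simp_all add: c_def)
  have add: "finite (fps_cutoff n ` case_prod (+) ` (?S \<times> ?S))"
      "card (fps_cutoff n ` case_prod (+) ` (?S \<times> ?S)) \<le> c ^ 2"
    unfolding c_def by (rule card_fps_cutoff_binop_le[OF fin]; simp add: fps_cutoff_add)+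
  have mult: "finite (fps_cutoff n ` case_prod (*) ` (?S \<times> ?S))"
      "card (fps_cutoff n ` case_prod (*) ` (?S \<times> ?S)) \<le> c ^ 2"
    unfolding c_def by (rule card_fps_cutoff_binop_le[OF fin]; rule fps_cutoff_mult_cong; assumption)+
  have neg_eq: "fps_cutoff n ` uminus ` ?S = uminus ` fps_cutoff n ` ?S"
    by (simp add: image_image fps_cutoff_uminus)
  have neg: "finite (fps_cutoff n ` uminus ` ?S)" "card (fps_cutoff n ` uminus ` ?S) \<le> c"
    unfolding neg_eq c_def using fin by (simp_all add: card_image_le)
  have split: "fps_cutoff n ` ring_steps G (Suc j) = fps_cutoff n ` ?S
      \<union> fps_cutoff n ` case_prod (+) ` (?S \<times> ?S) \<union> fps_cutoff n ` case_prod (*) ` (?S \<times> ?S)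
      \<union> fps_cutoff n ` uminus ` ?S"
    by (simp add: image_Un)
  have "card (fps_cutoff n ` ring_steps G (Suc j)) \<le> c + c ^ 2 + c ^ 2 + c"
    unfolding split c_def using add(2) mult(2) neg(2) unfolding c_def
    by (intro card_Un_le[THEN order_trans] add_mono) simp_all
  also have "\<dots> \<le> ?B ^ (4 * 4 ^ j)"
    using linear_plus_square_le_power[OF c] by simp
  moreover have "finite (fps_cutoff n ` ring_steps G (Suc j))"
    unfolding split by (intro finite_UnI fin add(1) mult(1) neg(1))
  ultimately show ?case by simp
qed

lemma card_fps_cutoff_tau_fps:
  fixes k :: nat
  assumes "prime CHAR('a::comm_ring_1)"
  defines "N \<equiv> CHAR('a) ^ k"
  shows "finite (fps_cutoff N ` tau_fps ` padic_int CHAR('a) :: 'a fps set)"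
    "card (fps_cutoff N ` tau_fps ` padic_int CHAR('a) :: 'a fps set) \<le> N"
proof -
  have sub: "fps_cutoff N ` tau_fps ` padic_int CHAR('a)
      \<subseteq> (\<lambda>a. fps_cutoff N ((1 - fps_X :: 'a fps) ^ a)) ` {..<N}"
  proof
    fix x :: "'a fps" assume "x \<in> fps_cutoff N ` tau_fps ` padic_int CHAR('a)"
    then obtain \<alpha> where \<alpha>: "\<alpha> \<in> padic_int CHAR('a)" "x = fps_cutoff N (tau_fps \<alpha>)" by blast
    then have "\<alpha> k < N" by (simp add: padic_int_def N_def)
    then show "x \<in> (\<lambda>a. fps_cutoff N ((1 - fps_X :: 'a fps) ^ a)) ` {..<N}"
      using fps_cutoff_tau_fps[OF assms(1) \<alpha>(1), of k] \<alpha>(2) by (auto simp: N_def)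
  qed
  then show "finite (fps_cutoff N ` tau_fps ` padic_int CHAR('a) :: 'a fps set)"
    by (rule finite_subset) simp
  from sub have "card (fps_cutoff N ` tau_fps ` padic_int CHAR('a) :: 'a fps set)
      \<le> card ((\<lambda>a. fps_cutoff N ((1 - fps_X :: 'a fps) ^ a)) ` {..<N})"
    by (rule card_mono[rotated]) simp
  also have "\<dots> \<le> N" using card_image_le[of "{..<N}"] by simp
  finally show "card (fps_cutoff N ` tau_fps ` padic_int CHAR('a) :: 'a fps set) \<le> N" .
qed

section \<open>Fractions and cleared linear combinations\<close>

definition fls_fractions :: "'a::field fps set \<Rightarrow> 'a fls set" where
  "fls_fractions R = {fps_to_fls n / fps_to_fls d |n d. n \<in> R \<and> d \<in> R \<and> d \<noteq> 0}"

lemma fls_fractionsI: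
  "n \<in> R \<Longrightarrow> d \<in> R \<Longrightarrow> d \<noteq> 0 \<Longrightarrow> x = fps_to_fls n / fps_to_fls d \<Longrightarrow> x \<in> fls_fractions R"
  unfolding fls_fractions_def by blast

lemma fls_fractionsE:
  assumes "x \<in> fls_fractions R"
  obtains n d where "n \<in> R" "d \<in> R" "d \<noteq> 0" "x = fps_to_fls n / fps_to_fls d"
  using assms unfolding fls_fractions_def by blast

lemma is_subfield_fls_fractions_ring_closure:
  fixes G :: "'a::field fps set"
  shows "is_subfield (fls_fractions (ring_closure G))"
  unfolding is_subfield_def
proof (intro conjI ballI)
  show "0 \<in> fls_fractions (ring_closure G)" "1 \<in> fls_fractions (ring_closure G)"
    by (rule fls_fractionsI[OF ring_closure_subring(1,2)] fls_fractionsI[OF ring_closure_subring(2,2)];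
        simp)+
next
  fix x y assume "x \<in> fls_fractions (ring_closure G)" "y \<in> fls_fractions (ring_closure G)"
  then obtain n d n' d' where nd: "n \<in> ring_closure G" "d \<in> ring_closure G" "d \<noteq> 0"
      "x = fps_to_fls n / fps_to_fls d"
    and nd': "n' \<in> ring_closure G" "d' \<in> ring_closure G" "d' \<noteq> 0"
      "y = fps_to_fls n' / fps_to_fls d'"
    by (metis fls_fractionsE)
  show "x + y \<in> fls_fractions (ring_closure G)"
    by (rule fls_fractionsI[of "n * d' + n' * d" _ "d * d'"])
      (use nd nd' in \<open>simp_all add: ring_closure_subring add_frac_eq fls_times_fps_to_fls\<close>)
  show "x * y \<in> fls_fractions (ring_closure G)"
    by (rule fls_fractionsI[of "n * n'" _ "d * d'"])
      (use nd nd' in \<open>simp_all add: ring_closure_subring fls_times_fps_to_fls\<close>)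
next
  fix x assume "x \<in> fls_fractions (ring_closure G)"
  then obtain n d where nd: "n \<in> ring_closure G" "d \<in> ring_closure G" "d \<noteq> 0"
      "x = fps_to_fls n / fps_to_fls d"
    by (rule fls_fractionsE)
  show "- x \<in> fls_fractions (ring_closure G)"
    by (rule fls_fractionsI[of "- n" _ d]) (use nd in \<open>simp_all add: ring_closure_subring\<close>)
  show "inverse x \<in> fls_fractions (ring_closure G)"
  proof (cases "n = 0")
    case True
    then show ?thesis by (intro fls_fractionsI[OF ring_closure_subring(1,2)]) (simp_all add: nd)
  next
    case False
    then show ?thesis by (intro fls_fractionsI[of d _ n]) (simp_all add: nd)
  qed
qed

lemma subfield_generated_subset_fls_fractions:
  fixes G :: "'a::field fps set"
  shows "subfield_generated (fps_to_fls ` G) \<subseteq> fls_fractions (ring_closure G)"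
  unfolding subfield_generated_def
proof (rule Inter_lower, intro CollectI conjI)
  show "fps_to_fls ` G \<subseteq> fls_fractions (ring_closure G)"
  proof
    fix x assume "x \<in> fps_to_fls ` G"
    then obtain g where "g \<in> G" "x = fps_to_fls g / fps_to_fls 1" by auto
    then show "x \<in> fls_fractions (ring_closure G)"
      using ring_closure_subring(2,3) by (intro fls_fractionsI[of g _ 1]) auto
  qed
qed (rule is_subfield_fls_fractions_ring_closure)

lemma fls_fractions_common_denominator:
  fixes G :: "'a::field fps set" and c :: "'b \<Rightarrow> 'a fls"
  assumes "finite F" "\<And>v. v \<in> F \<Longrightarrow> c v \<in> fls_fractions (ring_closure G)"
  shows "\<exists>D N. D \<in> ring_closure G \<and> D \<noteq> 0
    \<and> (\<forall>v\<in>F. N v \<in> ring_closure G \<and> c v * fps_to_fls D = fps_to_fls (N v))"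
  using assms
proof (induction F rule: finite_induct)
  case empty
  show ?case using ring_closure_subring(2) one_neq_zero by blast
next
  case (insert x F)
  then obtain D N where D: "D \<in> ring_closure G" "D \<noteq> 0"
    and N: "\<And>v. v \<in> F \<Longrightarrow> N v \<in> ring_closure G \<and> c v * fps_to_fls D = fps_to_fls (N v)"
    by blast
  have "c x \<in> fls_fractions (ring_closure G)" using insert.prems by blast
  then obtain n d where nd: "n \<in> ring_closure G" "d \<in> ring_closure G" "d \<noteq> 0"
      "c x = fps_to_fls n / fps_to_fls d"
    by (rule fls_fractionsE)
  define N' where "N' v = (if v = x then n * D else N v * d)" for v
  have "N' v \<in> ring_closure G \<and> c v * fps_to_fls (D * d) = fps_to_fls (N' v)"
    if "v \<in> insert x F" for v
  proof (cases "v = x")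
    case True
    have "c x * fps_to_fls (D * d) = fps_to_fls n * fps_to_fls D"
      using nd(3,4) by (simp add: fls_times_fps_to_fls)
    then show ?thesis
      using True nd(1) D(1) ring_closure_subring(5) by (simp add: N'_def fls_times_fps_to_fls)
  next
    case False
    then have v: "v \<in> F" using that by simp
    have "c v * fps_to_fls (D * d) = fps_to_fls (N v) * fps_to_fls d"
      using N[OF v] by (simp add: fls_times_fps_to_fls mult.assoc)
    moreover have "N v * d \<in> ring_closure G"
      using N[OF v] nd(2) by (blast intro: ring_closure_subring(5))
    ultimately show ?thesis using False by (simp add: N'_def fls_times_fps_to_fls)
  qed
  moreover have "D * d \<in> ring_closure G" "D * d \<noteq> 0"
    using D nd(2,3) ring_closure_subring(5) by simp_all
  ultimately show ?case by blast
qed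

definition fls_vanishes_below :: "int \<Rightarrow> 'a::zero fls \<Rightarrow> bool" where
  "fls_vanishes_below z f \<longleftrightarrow> (\<forall>i<z. fls_nth f i = 0)"

lemma fls_vanishes_below_iff_subdegree: "fls_vanishes_below z f \<longleftrightarrow> f = 0 \<or> z \<le> fls_subdegree f"
  unfolding fls_vanishes_below_def
proof
  assume "\<forall>i<z. fls_nth f i = 0"
  then show "f = 0 \<or> z \<le> fls_subdegree f" using fls_subdegree_geI by blast
next
  assume "f = 0 \<or> z \<le> fls_subdegree f"
  then show "\<forall>i<z. fls_nth f i = 0" by auto
qed

lemma fls_vanishes_below_mult:
  fixes f g :: "'a::field fls"
  assumes "fls_vanishes_below a f" "fls_vanishes_below b g"
  shows "fls_vanishes_below (a + b) (f * g)"
proof (cases "f = 0 \<or> g = 0")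
  case False
  then show ?thesis using assms by (simp add: fls_vanishes_below_iff_subdegree add_mono)
qed (auto simp: fls_vanishes_below_def)

lemma fls_vanishes_below_sum:
  "(\<And>i. i \<in> I \<Longrightarrow> fls_vanishes_below z (f i)) \<Longrightarrow> fls_vanishes_below z (sum f I)"
  by (induction I rule: infinite_finite_induct) (auto simp: fls_vanishes_below_def)

lemma fls_vanishes_below_fps_to_fls_diff:
  fixes f f' :: "'a::ab_group_add fps"
  shows "fps_cutoff L f = fps_cutoff L f' \<Longrightarrow> fls_vanishes_below (int L) (fps_to_fls (f - f'))"
  by (auto simp: fls_vanishes_below_def fps_cutoff_eq_fps_cutoff_iff)

lemma fps_cutoff_eq_if_cleared_combinations_agree:
  fixes g g' D D' :: "'a::field fps" and N N' :: "'a fls \<Rightarrow> 'a fps"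
  assumes "D \<noteq> 0" "fps_cutoff L D = fps_cutoff L D'"
    and "\<And>v. v \<in> F \<Longrightarrow> fps_cutoff L (N v) = fps_cutoff L (N' v)"
    and "fps_to_fls g * fps_to_fls D = (\<Sum>v\<in>F. fps_to_fls (N v) * v)"
    and "fps_to_fls g' * fps_to_fls D' = (\<Sum>v\<in>F. fps_to_fls (N' v) * v)"
    and "\<And>v. v \<in> F \<Longrightarrow> - int m \<le> fls_subdegree v"
  shows "fps_cutoff (L - subdegree D - m) g = fps_cutoff (L - subdegree D - m) g'"
proof -
  let ?G = "fps_to_fls g" and ?G' = "fps_to_fls g'" and ?D = "fps_to_fls D" and ?D' = "fps_to_fls D'"
  have "?G * ?D - ?G' * ?D' = (\<Sum>v\<in>F. fps_to_fls (N v - N' v) * v)"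
    using assms(4,5) by (simp add: sum_subtractf algebra_simps)
  moreover have "fls_vanishes_below (int L - int m) (\<Sum>v\<in>F. fps_to_fls (N v - N' v) * v)"
  proof (rule fls_vanishes_below_sum)
    fix v assume v: "v \<in> F"
    have "fls_vanishes_below (- int m) v"
      using assms(6)[OF v] by (simp add: fls_vanishes_below_iff_subdegree)
    from fls_vanishes_below_mult[OF fls_vanishes_below_fps_to_fls_diff[OF assms(3)[OF v]] this]
    show "fls_vanishes_below (int L - int m) (fps_to_fls (N v - N' v) * v)" by simp
  qed
  moreover have "fls_vanishes_below (0 + int L) (?G' * (?D - ?D'))"
  proof -
    have "fls_vanishes_below 0 ?G'"
      by (simp add: fls_vanishes_below_iff_subdegree fls_subdegree_fls_to_fps_gt0)
    from fls_vanishes_below_mult[OF this fls_vanishes_below_fps_to_fls_diff[OF assms(2)]]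
    show ?thesis by simp
  qed
  ultimately have prod: "fls_vanishes_below (int L - int m) ((?G - ?G') * ?D)"
    unfolding fls_vanishes_below_def by (auto simp: algebra_simps)
  have "fls_vanishes_below (int L - int m - int (subdegree D)) (?G - ?G')"
  proof (cases "g = g'")
    case False
    then have "?G - ?G' \<noteq> 0" by (metis eq_iff_diff_eq_0 fps_to_fls_eq_0_iff fps_to_fls_minus)
    then have "fls_subdegree ((?G - ?G') * ?D) = fls_subdegree (?G - ?G') + int (subdegree D)"
      using assms(1) by (simp add: fls_subdegree_fls_to_fps)
    then show ?thesis using prod assms(1) by (auto simp: fls_vanishes_below_iff_subdegree)
  qed (simp add: fls_vanishes_below_def)
  then have vanish: "\<forall>i<int L - int m - int (subdegree D). fls_nth (?G - ?G') i = 0"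
    unfolding fls_vanishes_below_def .
  show ?thesis unfolding fps_cutoff_eq_fps_cutoff_iff
  proof (intro allI impI)
    fix k assume "k < L - subdegree D - m"
    then have "int k < int L - int m - int (subdegree D)" by linarith
    with vanish have "fls_nth (?G - ?G') (int k) = 0" by blast
    then show "g $ k = g' $ k" by simp
  qed
qed

text \<open>Fixing the order \<open>e\<close> of the common denominator \<open>D\<close> is what makes the truncation of \<open>g\<close>
  modulo \<open>x\<^bsup>L - e - m\<^esup>\<close> depend only on the truncations of \<open>D\<close> and the \<open>N v\<close> modulo \<open>x\<^sup>L\<close>.\<close>
definition cleared_combinations :: "'a::field fps set \<Rightarrow> nat \<Rightarrow> 'a fls set \<Rightarrow> 'a fps set" where
  "cleared_combinations R e F = {g. \<exists>D N. D \<in> R \<and> D \<noteq> 0 \<and> subdegree D = e \<and> (\<forall>v\<in>F. N v \<in> R)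
     \<and> fps_to_fls g * fps_to_fls D = (\<Sum>v\<in>F. fps_to_fls (N v) * v)}"

lemma card_fps_cutoff_cleared_combinations:
  fixes R :: "'a::field fps set"
  assumes "finite F" "finite (fps_cutoff L ` R)" "\<And>v. v \<in> F \<Longrightarrow> - int m \<le> fls_subdegree v"
  shows "finite (fps_cutoff (L - e - m) ` cleared_combinations R e F)"
    "card (fps_cutoff (L - e - m) ` cleared_combinations R e F) \<le> card (fps_cutoff L ` R) ^ (card F + 1)"
proof -
  let ?T = "fps_cutoff L ` R"
  define W where "W = {(g, D, N). D \<in> R \<and> D \<noteq> 0 \<and> subdegree D = e \<and> (\<forall>v\<in>F. N v \<in> R)
     \<and> fps_to_fls g * fps_to_fls D = (\<Sum>v\<in>F. fps_to_fls (N v) * v)}"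
  define key :: "'a fps \<times> 'a fps \<times> ('a fls \<Rightarrow> 'a fps) \<Rightarrow> _"
    where "key = (\<lambda>(g, D, N). (fps_cutoff L D, restrict (\<lambda>v. fps_cutoff L (N v)) F))"
  have combinations: "cleared_combinations R e F = fst ` W"
    unfolding cleared_combinations_def W_def by force
  have keys: "key ` W \<subseteq> ?T \<times> PiE F (\<lambda>_. ?T)"
    by (auto simp: key_def W_def)
  have fin: "finite (?T \<times> PiE F (\<lambda>_. ?T))"
    using assms(1,2) by (simp add: finite_PiE)
  have det: "(fps_cutoff (L - e - m) \<circ> fst) w = (fps_cutoff (L - e - m) \<circ> fst) w'"
    if "w \<in> W" "w' \<in> W" "key w = key w'" for w w'
  proof -
    obtain g D N g' D' N' where w: "w = (g, D, N)" "w' = (g', D', N')" by (cases w, cases w') auto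
    have WD: "D \<noteq> 0" "subdegree D = e" "fps_to_fls g * fps_to_fls D = (\<Sum>v\<in>F. fps_to_fls (N v) * v)"
        "fps_to_fls g' * fps_to_fls D' = (\<Sum>v\<in>F. fps_to_fls (N' v) * v)"
      using that(1,2) by (simp_all add: W_def w)
    have D: "fps_cutoff L D = fps_cutoff L D'" using that(3) by (simp add: key_def w)
    have N: "fps_cutoff L (N v) = fps_cutoff L (N' v)" if "v \<in> F" for v
      using fun_cong[OF arg_cong[where f = snd, OF \<open>key w = key w'\<close>], of v] that
      by (simp add: key_def w)
    have "fps_cutoff (L - subdegree D - m) g = fps_cutoff (L - subdegree D - m) g'"
      by (rule fps_cutoff_eq_if_cleared_combinations_agree[OF WD(1) D N WD(3,4) assms(3)])
    then show ?thesis using WD(2) by (simp add: w)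
  qed
  have "finite (key ` W)" using finite_subset[OF keys fin] .
  note bound = card_image_le_if_determined[OF this det]
  show "finite (fps_cutoff (L - e - m) ` cleared_combinations R e F)"
    using bound(1) by (simp add: combinations image_comp)
  have "card (fps_cutoff (L - e - m) ` cleared_combinations R e F) \<le> card (key ` W)"
    using bound(2) by (simp add: combinations image_comp)
  also have "\<dots> \<le> card (?T \<times> PiE F (\<lambda>_. ?T))" by (rule card_mono[OF fin keys])
  also have "\<dots> = card ?T ^ (card F + 1)"
    using assms(1,2) by (simp add: card_cartesian_product card_PiE)
  finally show "card (fps_cutoff (L - e - m) ` cleared_combinations R e F) \<le> card ?T ^ (card F + 1)" .
qed

section \<open>Nowhere dense sets of power series\<close>

lemma ex_fps_cutoff_notin:
  fixes A :: "'a::zero fps set"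
  assumes "m \<le> M" "finite (fps_cutoff M ` A)" "card (fps_cutoff M ` A) < CARD('a) ^ (M - m)"
  shows "\<exists>f'. fps_cutoff m f' = fps_cutoff m f \<and> (\<forall>g\<in>A. fps_cutoff M g \<noteq> fps_cutoff M f')"
proof -
  define extend where "extend \<phi> = Abs_fps (\<lambda>i. if i < m then f $ i else if i < M then \<phi> i else 0)"
    for \<phi> :: "nat \<Rightarrow> 'a"
  define \<Phi> where "\<Phi> = PiE {m..<M} (\<lambda>_. UNIV :: 'a set)"
  have "inj_on extend \<Phi>"
  proof (rule inj_onI)
    fix \<phi> \<psi> assume \<phi>: "\<phi> \<in> \<Phi>" and \<psi>: "\<psi> \<in> \<Phi>" and eq: "extend \<phi> = extend \<psi>"
    show "\<phi> = \<psi>"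
    proof (rule ext)
      fix i
      show "\<phi> i = \<psi> i"
      proof (cases "i \<in> {m..<M}")
        case True
        then have "extend \<phi> $ i = \<phi> i" "extend \<psi> $ i = \<psi> i" by (simp_all add: extend_def)
        then show ?thesis using eq by simp
      next
        case False
        show ?thesis
          using PiE_arb[OF \<phi>[unfolded \<Phi>_def] False] PiE_arb[OF \<psi>[unfolded \<Phi>_def] False] by simp
      qed
    qed
  qed
  then have card_ext: "card (extend ` \<Phi>) = CARD('a) ^ (M - m)"
    by (simp add: card_image \<Phi>_def card_PiE)
  have "\<not> extend ` \<Phi> \<subseteq> fps_cutoff M ` A"
  proof
    assume "extend ` \<Phi> \<subseteq> fps_cutoff M ` A"
    from card_mono[OF assms(2) this] show False using assms(3) card_ext by simp
  qed
  then obtain \<phi> where "extend \<phi> \<notin> fps_cutoff M ` A" by blast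
  moreover have "fps_cutoff M (extend \<phi>) = extend \<phi>" "fps_cutoff m (extend \<phi>) = fps_cutoff m f"
    using assms(1) by (simp_all add: fps_eq_iff extend_def)
  ultimately show ?thesis by (metis image_eqI)
qed

lemma ex_power_exceeds_polynomial:
  fixes q E c :: nat
  assumes "2 \<le> q"
  shows "\<exists>k. c \<le> q ^ k \<and> (q ^ k + 2) ^ E < q ^ (q ^ k - c)"
proof -
  have "eventually (\<lambda>n::nat. (real n + 2) ^ E * real q ^ c < 2 ^ n) at_top" by real_asymp
  then obtain n0 where n0: "\<And>n. n \<ge> n0 \<Longrightarrow> (real n + 2) ^ E * real q ^ c < 2 ^ n"
    by (auto simp: eventually_at_top_linorder)
  define n where "n = q ^ (n0 + c)"
  have "n0 + c < 2 ^ (n0 + c)" by (rule less_exp)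
  also have "\<dots> \<le> n" unfolding n_def using assms by (simp add: power_mono)
  finally have "n0 + c < n" .
  then have n: "n0 \<le> n" "c \<le> n" by simp_all
  have "(real n + 2) ^ E * real q ^ c < 2 ^ n" using n0[OF n(1)] .
  also have "\<dots> \<le> real q ^ n" using assms by (intro power_mono) simp_all
  also have "\<dots> = real q ^ (n - c) * real q ^ c" using n(2) by (simp flip: power_add)
  finally have "(real n + 2) ^ E < real q ^ (n - c)" using assms by simp
  then have "real ((n + 2) ^ E) < real (q ^ (n - c))" by (simp add: add.commute)
  then have "(n + 2) ^ E < q ^ (n - c)" by (simp only: of_nat_less_iff)
  then show ?thesis using n(2) by (intro exI[of _ "n0 + c"]) (simp add: n_def)
qed

definition fps_nowhere_dense :: "'a::zero fps set \<Rightarrow> bool" where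
  "fps_nowhere_dense A \<longleftrightarrow>
     (\<forall>m f. \<exists>M f'. fps_cutoff m f' = fps_cutoff m f \<and> (\<forall>g\<in>A. fps_cutoff M g \<noteq> fps_cutoff M f'))"

lemma fps_cutoff_eq_mono:
  "fps_cutoff n f = fps_cutoff n g \<Longrightarrow> m \<le> n \<Longrightarrow> fps_cutoff m f = fps_cutoff m g"
  by (simp add: fps_cutoff_eq_fps_cutoff_iff)

text \<open>The Baire category theorem for the \<open>x\<close>-adic topology, by a diagonal construction:
  the stage-\<open>j\<close> approximation is kept below \<open>m\<^sub>j\<close> forever and avoids \<open>A\<^sub>j\<close> there.\<close>
lemma ex_fps_notin_nowhere_dense_seq:
  fixes A :: "nat \<Rightarrow> 'a::zero fps set"
  assumes "\<And>j. fps_nowhere_dense (A j)"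
  shows "\<exists>g. \<forall>j. g \<notin> A j"
proof -
  define escapes where "escapes j m f Mf \<longleftrightarrow> fps_cutoff m (snd Mf) = fps_cutoff m f
      \<and> (\<forall>g\<in>A j. fps_cutoff (fst Mf) g \<noteq> fps_cutoff (fst Mf) (snd Mf))"
    for j m f and Mf :: "nat \<times> 'a fps"
  define c where "c j m f = (SOME Mf. escapes j m f Mf)" for j m f
  have "\<exists>Mf. escapes j m f Mf" for j m f
    using assms[of j] unfolding fps_nowhere_dense_def escapes_def by auto
  then have step: "escapes j m f (c j m f)" for j m f
    unfolding c_def by (rule someI_ex)
  define st where "st = rec_nat (0, 0) (\<lambda>j (m, f). (max (fst (c j m f)) (Suc m), snd (c j m f)))"
  have st_Suc: "st (Suc j) = (max (fst (c j (fst (st j)) (snd (st j)))) (Suc (fst (st j))),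
      snd (c j (fst (st j)) (snd (st j))))" for j
    by (simp add: st_def case_prod_beta)
  have mono: "fst (st i) \<le> fst (st j)" if "i \<le> j" for i j
    using that by (induction j) (auto simp: st_Suc le_Suc_eq)
  have ge: "j \<le> fst (st j)" for j
    by (induction j) (simp_all add: st_Suc)
  have keep: "fps_cutoff (fst (st i)) (snd (st j)) = fps_cutoff (fst (st i)) (snd (st i))"
    if "i \<le> j" for i j
    using that
  proof (induction j)
    case (Suc j)
    show ?case
    proof (cases "i = Suc j")
      case False
      then have "i \<le> j" using Suc.prems by simp
      have "fps_cutoff (fst (st j)) (snd (st (Suc j))) = fps_cutoff (fst (st j)) (snd (st j))"
        using step unfolding escapes_def by (simp add: st_Suc)
      from fps_cutoff_eq_mono[OF this mono[OF \<open>i \<le> j\<close>]] show ?thesis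
        using Suc.IH[OF \<open>i \<le> j\<close>] by simp
    qed simp
  qed simp
  define g where "g = Abs_fps (\<lambda>i. snd (st (Suc i)) $ i)"
  have g: "fps_cutoff (fst (st j)) g = fps_cutoff (fst (st j)) (snd (st j))" for j
    unfolding fps_cutoff_eq_fps_cutoff_iff
  proof (intro allI impI)
    fix i assume i: "i < fst (st j)"
    have "i < fst (st (Suc i))" using ge[of "Suc i"] by simp
    then have "snd (st (max j (Suc i))) $ i = snd (st (Suc i)) $ i"
      using keep[of "Suc i" "max j (Suc i)"] by (simp add: fps_cutoff_eq_fps_cutoff_iff)
    moreover have "snd (st (max j (Suc i))) $ i = snd (st j) $ i"
      using keep[of j "max j (Suc i)"] i by (simp add: fps_cutoff_eq_fps_cutoff_iff)
    ultimately show "g $ i = snd (st j) $ i" by (simp add: g_def)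
  qed
  have "g \<notin> A j" for j
  proof
    assume "g \<in> A j"
    let ?c = "c j (fst (st j)) (snd (st j))"
    have "fps_cutoff (fst ?c) g = fps_cutoff (fst ?c) (snd ?c)"
      using fps_cutoff_eq_mono[OF g[of "Suc j"]] by (simp add: st_Suc)
    with step[of j "fst (st j)" "snd (st j)"] \<open>g \<in> A j\<close> show False
      unfolding escapes_def by blast
  qed
  then show ?thesis by blast
qed

lemma ex_fps_notin_countable_nowhere_dense:
  fixes \<A> :: "'a::zero fps set set"
  assumes "countable \<A>" "\<And>A. A \<in> \<A> \<Longrightarrow> fps_nowhere_dense A"
  shows "\<exists>g. \<forall>A\<in>\<A>. g \<notin> A"
proof (cases "\<A> = {}")
  case False
  then have "range (from_nat_into \<A>) = \<A>" using assms(1) by (rule range_from_nat_into)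
  moreover have "\<exists>g. \<forall>j. g \<notin> from_nat_into \<A> j"
    using ex_fps_notin_nowhere_dense_seq assms(2) from_nat_into[OF False] by metis
  ultimately show ?thesis by auto
qed simp

lemma fps_nowhere_dense_cleared_combinations:
  fixes R :: "'a::field fps set"
  assumes "2 \<le> q" "q \<le> CARD('a)" "finite F"
    and R: "\<And>k. finite (fps_cutoff (q ^ k) ` R) \<and> card (fps_cutoff (q ^ k) ` R) \<le> (q ^ k + 2) ^ E"
  shows "fps_nowhere_dense (cleared_combinations R e F)"
  unfolding fps_nowhere_dense_def
proof (intro allI)
  fix m and f :: "'a fps"
  define m0 where "m0 = (\<Sum>v\<in>F. nat (- fls_subdegree v))"
  have m0: "- int m0 \<le> fls_subdegree v" if "v \<in> F" for v
  proof -
    have "nat (- fls_subdegree v) \<le> m0"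
      unfolding m0_def by (intro member_le_sum) (use that assms(3) in auto)
    then show ?thesis by linarith
  qed
  obtain k where k: "m + e + m0 \<le> q ^ k"
    "(q ^ k + 2) ^ (E * (card F + 1)) < q ^ (q ^ k - (m + e + m0))"
    using ex_power_exceeds_polynomial[OF assms(1)] by blast
  define N where "N = q ^ k"
  define M where "M = N - e - m0"
  let ?A = "cleared_combinations R e F"
  have RN: "finite (fps_cutoff N ` R)" "card (fps_cutoff N ` R) \<le> (N + 2) ^ E"
    using R[of k] by (simp_all add: N_def)
  note count = card_fps_cutoff_cleared_combinations[OF assms(3) RN(1) m0, of e, folded M_def]
  have "card (fps_cutoff M ` ?A) \<le> card (fps_cutoff N ` R) ^ (card F + 1)" by (rule count(2))
  also have "\<dots> \<le> ((N + 2) ^ E) ^ (card F + 1)" using RN(2) by (rule power_mono) simp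
  also have "\<dots> = (N + 2) ^ (E * (card F + 1))" by (simp only: power_mult)
  also have "\<dots> < q ^ (N - (m + e + m0))" using k(2) by (simp only: N_def)
  also have "N - (m + e + m0) = M - m" by (simp add: M_def)
  also have "q ^ (M - m) \<le> CARD('a) ^ (M - m)" using assms(2) by (rule power_mono) simp
  finally have "card (fps_cutoff M ` ?A) < CARD('a) ^ (M - m)" .
  moreover have "m \<le> M" using k(1) by (simp add: M_def N_def)
  ultimately show "\<exists>M f'. fps_cutoff m f' = fps_cutoff m f \<and> (\<forall>g\<in>?A. fps_cutoff M g \<noteq> fps_cutoff M f')"
    using ex_fps_cutoff_notin[OF _ count(1)] by blast
qed

lemma cleared_combination_if_spans_over:
  fixes G :: "'a::field fps set"
  assumes "spans_over K B" "K \<subseteq> fls_fractions (ring_closure G)"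
  shows "\<exists>j e F. finite F \<and> F \<subseteq> B \<and> g \<in> cleared_combinations (ring_steps G j) e F"
proof -
  have "\<exists>F c. finite F \<and> F \<subseteq> B \<and> (\<forall>v\<in>F. c v \<in> K) \<and> fps_to_fls g = (\<Sum>v\<in>F. c v * v)"
    using assms(1) unfolding spans_over_def by (rule spec)
  then obtain F c where F: "finite F" "F \<subseteq> B" "\<And>v. v \<in> F \<Longrightarrow> c v \<in> K"
      "fps_to_fls g = (\<Sum>v\<in>F. c v * v)"
    by blast
  have "\<exists>D N. D \<in> ring_closure G \<and> D \<noteq> 0
      \<and> (\<forall>v\<in>F. N v \<in> ring_closure G \<and> c v * fps_to_fls D = fps_to_fls (N v))"
    by (rule fls_fractions_common_denominator[OF F(1)]) (use F(3) assms(2) in blast)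
  then obtain D N where
    D: "D \<in> ring_closure G" "D \<noteq> 0" and
    N: "\<forall>v\<in>F. N v \<in> ring_closure G \<and> c v * fps_to_fls D = fps_to_fls (N v)"
    by blast
  have "\<And>v. v \<in> F \<Longrightarrow> N v \<in> ring_closure G" using N by blast
  from ring_steps_common_bound[OF F(1) this] obtain j1 where j1: "\<forall>v\<in>F. N v \<in> ring_steps G j1" ..
  obtain j2 where j2: "D \<in> ring_steps G j2" using D(1) unfolding ring_closure_def by blast
  define j where "j = max j1 j2"
  have Dj: "D \<in> ring_steps G j" using j2 ring_steps_mono[of j2 j G] by (auto simp: j_def)
  have Nj: "\<forall>v\<in>F. N v \<in> ring_steps G j" using j1 ring_steps_mono[of j1 j G] by (auto simp: j_def)
  have "fps_to_fls g * fps_to_fls D = (\<Sum>v\<in>F. c v * fps_to_fls D * v)"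
    unfolding F(4) sum_distrib_right by (intro sum.cong) (simp_all add: ac_simps)
  also have "\<dots> = (\<Sum>v\<in>F. fps_to_fls (N v) * v)" using N by (intro sum.cong) simp_all
  finally have "g \<in> cleared_combinations (ring_steps G j) (subdegree D) F"
    unfolding cleared_combinations_def using Dj D(2) Nj by blast
  with F(1,2) show ?thesis by blast
qed

lemma card_fps_cutoff_ring_steps_tau_fps:
  assumes "prime CHAR('a::comm_ring_1)"
  shows "finite (fps_cutoff (CHAR('a) ^ k) ` ring_steps (tau_fps ` padic_int CHAR('a)) j :: 'a fps set)
    \<and> card (fps_cutoff (CHAR('a) ^ k) ` ring_steps (tau_fps ` padic_int CHAR('a)) j :: 'a fps set)
        \<le> (CHAR('a) ^ k + 2) ^ 4 ^ j"
  using card_fps_cutoff_ring_steps[OF card_fps_cutoff_tau_fps(1)[OF assms], of k j]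
    card_fps_cutoff_tau_fps(2)[OF assms, of k]
  by (meson add_le_mono1 order_trans power_mono zero_le)

lemma is_subfield_subfield_generated: "is_subfield (subfield_generated S)"
  unfolding subfield_generated_def is_subfield_def by auto

lemma spans_over_if_maximal_lin_indep_over:
  assumes K: "is_subfield K" and B: "lin_indep_over K B"
    and max: "\<And>X. lin_indep_over K X \<Longrightarrow> B \<subseteq> X \<Longrightarrow> X = B"
  shows "spans_over K B"
  unfolding spans_over_def
proof
  fix y
  show "\<exists>F c. finite F \<and> F \<subseteq> B \<and> (\<forall>v\<in>F. c v \<in> K) \<and> y = (\<Sum>v\<in>F. c v * v)"
  proof (cases "y \<in> B")
    case True
    then show ?thesis using K by (intro exI[of _ "{y}"] exI[of _ "\<lambda>_. 1"]) (auto simp: is_subfield_def)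
  next
    case False
    then have "\<not> lin_indep_over K (insert y B)" using max[of "insert y B"] by auto
    then obtain F c where F: "finite F" "F \<subseteq> insert y B" "\<forall>v\<in>F. c v \<in> K" "(\<Sum>v\<in>F. c v * v) = 0"
      and nz: "\<exists>v\<in>F. c v \<noteq> 0"
      unfolding lin_indep_over_def by blast
    have y: "y \<in> F" "c y \<noteq> 0"
    proof (atomize (full), rule ccontr)
      assume "\<not> (y \<in> F \<and> c y \<noteq> 0)"
      then have "(\<Sum>v\<in>F - {y}. c v * v) = 0"
        using F(4) sum.remove[OF F(1), of y "\<lambda>v. c v * v"] by (cases "y \<in> F") auto
      moreover have "finite (F - {y})" "F - {y} \<subseteq> B" "\<forall>v\<in>F - {y}. c v \<in> K" using F by auto
      ultimately have "\<forall>v\<in>F - {y}. c v = 0" using B unfolding lin_indep_over_def by blast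
      then show False using nz \<open>\<not> (y \<in> F \<and> c y \<noteq> 0)\<close> by auto
    qed
    define d where "d v = - c v * inverse (c y)" for v
    have "c y * y + (\<Sum>v\<in>F - {y}. c v * v) = 0"
      using F(4) sum.remove[OF F(1) y(1), of "\<lambda>v. c v * v"] by simp
    then have "c y * y = - (\<Sum>v\<in>F - {y}. c v * v)" by (simp add: eq_neg_iff_add_eq_0)
    then have "y = inverse (c y) * - (\<Sum>v\<in>F - {y}. c v * v)" using y(2) by (simp add: field_simps)
    also have "\<dots> = (\<Sum>v\<in>F - {y}. d v * v)"
      by (simp add: d_def sum_distrib_left sum_negf algebra_simps)
    finally have "y = (\<Sum>v\<in>F - {y}. d v * v)" .
    moreover have "\<forall>v\<in>F - {y}. d v \<in> K"
      using F(3) y K by (auto simp: d_def is_subfield_def)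
    ultimately show ?thesis using F(1,2) by (intro exI[of _ "F - {y}"] exI[of _ d]) auto
  qed
qed

lemma ex_basis_over:
  assumes "is_subfield K"
  shows "\<exists>B. basis_over K B"
proof -
  let ?I = "{B. lin_indep_over K B}"
  have "\<exists>M\<in>?I. \<forall>X\<in>?I. M \<subseteq> X \<longrightarrow> X = M"
  proof (rule subset_Zorn)
    fix C assume C: "subset.chain ?I C"
    show "\<exists>U\<in>?I. \<forall>X\<in>C. X \<subseteq> U"
    proof (cases "C = {}")
      case True then show ?thesis by (intro bexI[of _ "{}"]) (auto simp: lin_indep_over_def)
    next
      case False
      have "lin_indep_over K (\<Union>C)" unfolding lin_indep_over_def
      proof (intro allI impI)
        fix F c assume H: "finite F \<and> F \<subseteq> \<Union>C \<and> (\<forall>v\<in>F. c v \<in> K) \<and> (\<Sum>v\<in>F. c v * v) = 0"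
        obtain B where "B \<in> C" "F \<subseteq> B"
          using finite_subset_Union_chain[of F C ?I] H False C by blast
        then show "\<forall>v\<in>F. c v = 0" using C H unfolding lin_indep_over_def subset_chain_def by blast
      qed
      then show ?thesis by blast
    qed
  qed
  then obtain B where "lin_indep_over K B" "\<And>X. lin_indep_over K X \<Longrightarrow> B \<subseteq> X \<Longrightarrow> X = B"
    by auto
  with spans_over_if_maximal_lin_indep_over[OF assms] show ?thesis
    unfolding basis_over_def by blast
qed

theorem lemma3p2:
  fixes p :: nat
  assumes "prime p"
    and "CARD('a::field) = p"
  defines "K \<equiv> subfield_generated ((tau :: (nat \<Rightarrow> nat) \<Rightarrow> 'a fls) ` padic_int p)"
  shows "(\<exists>B. basis_over K B) \<and> (\<forall>B. basis_over K B \<longrightarrow> uncountable B)"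
proof -
  have p: "CHAR('a) = p" using CHAR_eq_CARD_prime[OF assms(1,2)] .
  have pr: "prime CHAR('a)" using assms(1) p by simp
  let ?G = "tau_fps ` padic_int p :: 'a fps set"
  have "tau ` padic_int p = fps_to_fls ` ?G" by (simp add: image_image tau_eq_fps_to_fls_tau_fps)
  then have K: "K \<subseteq> fls_fractions (ring_closure ?G)"
    unfolding K_def by (simp only:) (rule subfield_generated_subset_fls_fractions)
  have bound: "finite (fps_cutoff (p ^ k) ` ring_steps ?G j)
      \<and> card (fps_cutoff (p ^ k) ` ring_steps ?G j) \<le> (p ^ k + 2) ^ 4 ^ j" for j k
    using card_fps_cutoff_ring_steps_tau_fps[OF pr, of k j] unfolding p .
  have q: "2 \<le> p" "p \<le> CARD('a)" using prime_ge_2_nat[OF assms(1)] assms(2) by simp_all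
  have nowhere_dense: "fps_nowhere_dense (cleared_combinations (ring_steps ?G j) e F)"
    if "finite F" for j e F
    by (rule fps_nowhere_dense_cleared_combinations[OF q that bound])
  show ?thesis
  proof (intro conjI allI impI)
    show "\<exists>B. basis_over K B" unfolding K_def by (rule ex_basis_over[OF is_subfield_subfield_generated])
  next
    fix B assume B: "basis_over K B"
    show "uncountable B"
    proof
      assume "countable B"
      define \<F> where "\<F> = {F. finite F \<and> F \<subseteq> B}"
      define \<A> where "\<A> = (\<lambda>(j, e, F). cleared_combinations (ring_steps ?G j) e F) ` (UNIV \<times> UNIV \<times> \<F>)"
      have "countable \<F>" unfolding \<F>_def using \<open>countable B\<close> by (rule countable_Collect_finite_subset)
      then have "countable \<A>" unfolding \<A>_def by simp
      moreover have "fps_nowhere_dense A" if "A \<in> \<A>" for A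
        using that nowhere_dense unfolding \<A>_def \<F>_def by auto
      ultimately obtain g where g: "\<forall>A\<in>\<A>. g \<notin> A"
        using ex_fps_notin_countable_nowhere_dense by blast
      have "spans_over K B" using B by (simp add: basis_over_def)
      then have "\<exists>j e F. finite F \<and> F \<subseteq> B \<and> g \<in> cleared_combinations (ring_steps ?G j) e F"
        by (rule cleared_combination_if_spans_over[OF _ K])
      then obtain j e F where "finite F" "F \<subseteq> B" and gA: "g \<in> cleared_combinations (ring_steps ?G j) e F"
        by blast
      then have "cleared_combinations (ring_steps ?G j) e F \<in> \<A>"
        unfolding \<A>_def by (intro image_eqI[of _ _ "(j, e, F)"]) (simp_all add: \<F>_def)
      with g gA show False by blast
    qed
  qed
qed

end
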